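(* Let $\alpha>0$, $\sigma_A^2\ge0$, $\eta>0$, $q>0$, let $K^*(x)=\alpha x+\tfrac13[(2x+\alpha^2)^{3/2}-\alpha^3]$ and define \[ h(x)=K^*(x)-\eta\sqrt{2x+q^2}+\eta q,\qquad x\ge0. \] Assume $\nabla h(0)\ge0$. Then $h$ is convex and increasing on $\mathbb{R}_+$. Moreover, the diffusion Bellman error \[ \mathcal{E}^D_B(x)=\min_{u\ge0}\Bigl(x+\tfrac12u^2+(-u+\alpha)\nabla h(x)+\tfrac12\sigma_A^2\nabla^2h(x)\Bigr) \] is bounded over $x\in\mathbb{R}_+$, and $|\mathcal{E}^D_B(x)-\eta|=O\bigl((1+x)^{-1/2}\bigr)$ as $x\to\infty$.
   Context: This is the diffusion approximation of the speed scaling queue $X(t+1)=X(t)-U(t)+A(t+1)$ with cost $c(x,u)=x+\tfrac12u^2$, whose i.i.d. arrivals have mean $\alpha$ and variance $\sigma_A^2$; the diffusion generator is $\mathcal{D}^D_uh(x)=(-u+\alpha)\nabla h(x)+\tfrac12\sigma_A^2\nabla^2h(x)$. *)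

theory Defs
  imports "HOL-Analysis.Analysis" "HOL-Library.Landau_Symbols"
begin

definition Kstar :: "real \<Rightarrow> real \<Rightarrow> real" where
  "Kstar \<alpha> x = \<alpha> * x + (1/3) * ((2 * x + \<alpha>\<^sup>2) powr (3/2) - \<alpha> ^ 3)"

definition hfun :: "real \<Rightarrow> real \<Rightarrow> real \<Rightarrow> real \<Rightarrow> real" where
  "hfun \<alpha> \<eta> q x = Kstar \<alpha> x - \<eta> * sqrt (2 * x + q\<^sup>2) + \<eta> * q"

definition bellman_err_D ::
  "real \<Rightarrow> real \<Rightarrow> (real \<Rightarrow> real) \<Rightarrow> real \<Rightarrow> real" where
  "bellman_err_D \<alpha> \<sigma>A2 h x =
     (INF u\<in>{0..}. x + u\<^sup>2 / 2 + (- u + \<alpha>) * deriv h x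
                    + \<sigma>A2 / 2 * deriv (deriv h) x)"

end

theory Submission
  imports Defs "HOL-Real_Asymp.Real_Asymp"
begin

text \<open>With \<open>s = \<surd>(2x + \<alpha>\<^sup>2)\<close> and \<open>r = \<surd>(2x + q\<^sup>2)\<close> one has \<open>h' = \<alpha> + s - \<eta>/r\<close>, which is
  increasing, so \<open>h\<close> is convex, and \<open>h' \<ge> 0\<close> on \<open>\<real>\<^sub>+\<close> once \<open>h'(0) \<ge> 0\<close>. The minimising control
  is then \<open>u = h'(x)\<close>, and since \<open>K\<^sup>*\<close> solves the Bellman equation exactly (this is the
  identity \<open>s\<^sup>2 = 2x + \<alpha>\<^sup>2\<close>), the Bellman error collapses to
  \<open>\<eta> s/r - \<eta>\<^sup>2/(2r\<^sup>2) + \<sigma>\<^sub>A\<^sup>2/2 \<cdot> (1/s + \<eta>/r\<^sup>3)\<close>. As \<open>s - r = (\<alpha>\<^sup>2 - q\<^sup>2)/(s + r)\<close>, this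
  is \<open>\<eta> + O(1/r + 1/s)\<close>, and both \<open>1/r\<close> and \<open>1/s\<close> decay like \<open>(1 + x)\<^sup>-\<^sup>1\<^sup>/\<^sup>2\<close>.\<close>

definition hfun' :: "real \<Rightarrow> real \<Rightarrow> real \<Rightarrow> real \<Rightarrow> real" where
  "hfun' \<alpha> \<eta> q x = \<alpha> + sqrt (2*x + \<alpha>\<^sup>2) - \<eta> / sqrt (2*x + q\<^sup>2)"

definition hfun'' :: "real \<Rightarrow> real \<Rightarrow> real \<Rightarrow> real \<Rightarrow> real" where
  "hfun'' \<alpha> \<eta> q x = 1 / sqrt (2*x + \<alpha>\<^sup>2) + \<eta> / sqrt (2*x + q\<^sup>2) ^ 3"

lemma hfun_has_real_derivative:
  assumes "0 < 2*x + \<alpha>\<^sup>2" "0 < 2*x + q\<^sup>2"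
  shows "(hfun \<alpha> \<eta> q has_real_derivative hfun' \<alpha> \<eta> q x) (at x)"
  unfolding hfun_def[abs_def] Kstar_def hfun'_def
  using assms by (auto intro!: derivative_eq_intros
      simp: powr_half_sqrt field_simps real_sqrt_mult[symmetric] power2_eq_square)

lemma hfun'_has_real_derivative:
  assumes "0 < 2*x + \<alpha>\<^sup>2" "0 < 2*x + q\<^sup>2"
  shows "(hfun' \<alpha> \<eta> q has_real_derivative hfun'' \<alpha> \<eta> q x) (at x)"
  unfolding hfun'_def[abs_def] hfun''_def
  using assms by (auto intro!: derivative_eq_intros
      simp: field_simps real_sqrt_mult[symmetric] power2_eq_square power3_eq_cube)

lemma hfun'_mono:
  assumes "x \<le> y" "0 < 2*x + q\<^sup>2" "0 \<le> \<eta>"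
  shows "hfun' \<alpha> \<eta> q x \<le> hfun' \<alpha> \<eta> q y"
proof -
  have "\<eta> / sqrt (2*y + q\<^sup>2) \<le> \<eta> / sqrt (2*x + q\<^sup>2)"
    using assms by (intro divide_left_mono) auto
  moreover have "sqrt (2*x + \<alpha>\<^sup>2) \<le> sqrt (2*y + \<alpha>\<^sup>2)"
    using assms by simp
  ultimately show ?thesis
    unfolding hfun'_def by linarith
qed

lemma open_hfun_domain: "open {x::real. 0 < 2*x + \<alpha>\<^sup>2 \<and> 0 < 2*x + q\<^sup>2}"
  by (intro open_Collect_conj open_Collect_less continuous_intros)

lemma deriv_hfun:
  assumes "0 < 2*x + \<alpha>\<^sup>2" "0 < 2*x + q\<^sup>2"
  shows "deriv (hfun \<alpha> \<eta> q) x = hfun' \<alpha> \<eta> q x"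
  using assms by (intro DERIV_imp_deriv hfun_has_real_derivative)

lemma deriv_deriv_hfun:
  assumes "0 < 2*x + \<alpha>\<^sup>2" "0 < 2*x + q\<^sup>2"
  shows "deriv (deriv (hfun \<alpha> \<eta> q)) x = hfun'' \<alpha> \<eta> q x"
proof (rule DERIV_imp_deriv)
  show "(deriv (hfun \<alpha> \<eta> q) has_real_derivative hfun'' \<alpha> \<eta> q x) (at x)"
    using assms
    by (intro has_field_derivative_transform_within_open[OF hfun'_has_real_derivative
          open_hfun_domain[of \<alpha> q]]) (auto simp: deriv_hfun)
qed

lemma two_mul_add_power2_pos: "0 \<le> x \<Longrightarrow> a \<noteq> 0 \<Longrightarrow> 0 < 2*x + (a::real)\<^sup>2"
  by (simp add: add_nonneg_pos)

lemma convex_on_hfun: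
  assumes "\<alpha> \<noteq> 0" "q \<noteq> 0" "0 \<le> \<eta>"
  shows "convex_on {0..} (hfun \<alpha> \<eta> q)"
proof (rule convex_on_realI[where f' = "hfun' \<alpha> \<eta> q"])
  show "connected {0::real..}"
    by (simp add: is_interval_connected)
  show "(hfun \<alpha> \<eta> q has_real_derivative hfun' \<alpha> \<eta> q x) (at x)" if "x \<in> {0..}" for x
    using that assms by (intro hfun_has_real_derivative two_mul_add_power2_pos) auto
  show "hfun' \<alpha> \<eta> q x \<le> hfun' \<alpha> \<eta> q y" if "x \<in> {0..}" "y \<in> {0..}" "x \<le> y" for x y
    using that assms by (intro hfun'_mono two_mul_add_power2_pos) auto
qed

lemma mono_on_hfun:
  assumes "\<alpha> \<noteq> 0" "q \<noteq> 0" "0 \<le> \<eta>" "0 \<le> hfun' \<alpha> \<eta> q 0"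
  shows "mono_on {0..} (hfun \<alpha> \<eta> q)"
proof (rule mono_onI)
  fix x y :: real
  assume "x \<in> {0..}" "y \<in> {0..}" "x \<le> y"
  show "hfun \<alpha> \<eta> q x \<le> hfun \<alpha> \<eta> q y"
  proof (rule DERIV_nonneg_imp_nondecreasing[OF \<open>x \<le> y\<close>])
    fix t assume "x \<le> t" "t \<le> y"
    with \<open>x \<in> {0..}\<close> have t: "0 \<le> t" by simp
    have "0 \<le> hfun' \<alpha> \<eta> q t"
      using t assms hfun'_mono[of 0 t q \<eta> \<alpha>] by (simp add: two_mul_add_power2_pos)
    moreover have "(hfun \<alpha> \<eta> q has_real_derivative hfun' \<alpha> \<eta> q t) (at t)"
      using t assms by (intro hfun_has_real_derivative two_mul_add_power2_pos)
    ultimately show "\<exists>d. (hfun \<alpha> \<eta> q has_real_derivative d) (at t) \<and> 0 \<le> d"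
      by blast
  qed
qed

lemma INF_quadratic_control:
  fixes c a d e :: real
  assumes "0 \<le> d"
  shows "(INF u\<in>{0..}. c + u\<^sup>2 / 2 + (- u + a) * d + e) = c - d\<^sup>2 / 2 + a * d + e"
proof (rule cInf_eq_minimum)
  show "c - d\<^sup>2 / 2 + a * d + e \<in> (\<lambda>u. c + u\<^sup>2 / 2 + (- u + a) * d + e) ` {0..}"
    using assms by (intro rev_image_eqI[of d]) (auto simp: power2_eq_square field_simps)
next
  fix y assume "y \<in> (\<lambda>u. c + u\<^sup>2 / 2 + (- u + a) * d + e) ` {0..}"
  then obtain u where "y = c + u\<^sup>2 / 2 + (- u + a) * d + e" by auto
  then have "y = c - d\<^sup>2 / 2 + a * d + e + (u - d)\<^sup>2 / 2"
    by (simp add: power2_eq_square field_simps)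
  then show "c - d\<^sup>2 / 2 + a * d + e \<le> y" by simp
qed

lemma bellman_err_D_hfun:
  assumes "0 \<le> x" "\<alpha> \<noteq> 0" "q \<noteq> 0" "0 \<le> hfun' \<alpha> \<eta> q x"
  shows "bellman_err_D \<alpha> \<sigma>A2 (hfun \<alpha> \<eta> q) x
    = \<eta> * sqrt (2*x + \<alpha>\<^sup>2) / sqrt (2*x + q\<^sup>2) - (\<eta> / sqrt (2*x + q\<^sup>2))\<^sup>2 / 2
      + \<sigma>A2 / 2 * hfun'' \<alpha> \<eta> q x"
proof -
  define s where "s = sqrt (2*x + \<alpha>\<^sup>2)"
  define e where "e = \<eta> / sqrt (2*x + q\<^sup>2)"
  have "s\<^sup>2 = 2*x + \<alpha>\<^sup>2"
    using assms by (simp add: s_def two_mul_add_power2_pos less_imp_le)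
  then have Kstar_identity: "x - (\<alpha> + s - e)\<^sup>2 / 2 + \<alpha> * (\<alpha> + s - e) = s * e - e\<^sup>2 / 2"
    by (simp add: power2_eq_square field_simps)
  have "bellman_err_D \<alpha> \<sigma>A2 (hfun \<alpha> \<eta> q) x
      = (INF u\<in>{0..}. x + u\<^sup>2 / 2 + (- u + \<alpha>) * hfun' \<alpha> \<eta> q x + \<sigma>A2 / 2 * hfun'' \<alpha> \<eta> q x)"
    using assms unfolding bellman_err_D_def
    by (simp add: deriv_hfun deriv_deriv_hfun two_mul_add_power2_pos)
  also have "\<dots> = x - (hfun' \<alpha> \<eta> q x)\<^sup>2 / 2 + \<alpha> * hfun' \<alpha> \<eta> q x + \<sigma>A2 / 2 * hfun'' \<alpha> \<eta> q x"
    using assms(4) by (rule INF_quadratic_control)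
  also have "\<dots> = s * e - e\<^sup>2 / 2 + \<sigma>A2 / 2 * hfun'' \<alpha> \<eta> q x"
    using Kstar_identity by (simp add: hfun'_def s_def e_def)
  finally show ?thesis
    by (simp add: s_def e_def)
qed

lemma bellman_residual_le:
  fixes \<alpha> q s r \<eta> \<sigma> :: real
  assumes "0 < \<alpha>" "\<alpha> \<le> s" "0 < q" "q \<le> r" "s\<^sup>2 - r\<^sup>2 = \<alpha>\<^sup>2 - q\<^sup>2" "0 \<le> \<eta>" "0 \<le> \<sigma>"
  shows "\<bar>\<eta> * s / r - (\<eta> / r)\<^sup>2 / 2 + \<sigma> / 2 * (1 / s + \<eta> / r ^ 3) - \<eta>\<bar>
    \<le> (\<eta> * \<bar>\<alpha>\<^sup>2 - q\<^sup>2\<bar> / \<alpha> + \<eta>\<^sup>2 / (2 * q) + \<sigma> * \<eta> / (2 * q\<^sup>2)) / r + \<sigma> / (2 * s)"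
proof -
  have r: "0 < r" and s: "0 < s"
    using assms by linarith+
  have "s - r = (s\<^sup>2 - r\<^sup>2) / (s + r)"
    using r s by (simp add: field_simps power2_eq_square)
  then have "\<bar>s - r\<bar> = \<bar>\<alpha>\<^sup>2 - q\<^sup>2\<bar> / (s + r)"
    using r s assms(5) by simp
  also have "\<dots> \<le> \<bar>\<alpha>\<^sup>2 - q\<^sup>2\<bar> / \<alpha>"
    using assms r by (intro divide_left_mono) auto
  finally have sr: "\<eta> * \<bar>s - r\<bar> \<le> \<eta> * (\<bar>\<alpha>\<^sup>2 - q\<^sup>2\<bar> / \<alpha>)"
    using assms(6) by (rule mult_left_mono)
  have "\<eta> * \<bar>s - r\<bar> / r \<le> \<eta> * \<bar>\<alpha>\<^sup>2 - q\<^sup>2\<bar> / \<alpha> / r"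
    using divide_right_mono[OF sr, of r] r by simp
  moreover have "\<bar>\<eta> * s / r - \<eta>\<bar> = \<eta> * \<bar>s - r\<bar> / r"
  proof -
    have "\<eta> * s / r - \<eta> = \<eta> * (s - r) / r"
      using r by (simp add: field_simps)
    then show ?thesis
      using assms r by (simp add: abs_mult)
  qed
  moreover have "(\<eta> / r)\<^sup>2 / 2 \<le> \<eta>\<^sup>2 / (2 * q) / r"
  proof -
    have "(\<eta> / r)\<^sup>2 / 2 = \<eta>\<^sup>2 / (2 * r) / r"
      using r by (simp add: power2_eq_square field_simps)
    also have "\<dots> \<le> \<eta>\<^sup>2 / (2 * q) / r"
      using assms r by (intro divide_right_mono divide_left_mono) auto
    finally show ?thesis .
  qed
  moreover have "\<sigma> / 2 * (\<eta> / r ^ 3) \<le> \<sigma> * \<eta> / (2 * q\<^sup>2) / r"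
  proof -
    have "\<sigma> / 2 * (\<eta> / r ^ 3) = \<sigma> * \<eta> / (2 * r\<^sup>2) / r"
      using r by (simp add: power2_eq_square power3_eq_cube field_simps)
    also have "\<dots> \<le> \<sigma> * \<eta> / (2 * q\<^sup>2) / r"
      using assms r by (intro divide_right_mono divide_left_mono mult_left_mono power_mono) auto
    finally show ?thesis .
  qed
  moreover have "0 \<le> (\<eta> / r)\<^sup>2 / 2" "0 \<le> \<sigma> / 2 * (\<eta> / r ^ 3)" "0 \<le> \<sigma> / (2 * s)"
    using assms r s by simp_all
  moreover have "\<sigma> / 2 * (1 / s + \<eta> / r ^ 3) = \<sigma> / (2 * s) + \<sigma> / 2 * (\<eta> / r ^ 3)"
    by (simp add: distrib_left)
  ultimately show ?thesis
    using abs_ge_self[of "\<eta> * s / r - \<eta>"] abs_ge_minus_self[of "\<eta> * s / r - \<eta>"]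
    by (simp only: abs_le_iff add_divide_distrib) linarith
qed

lemma bellman_err_D_hfun_residual_le:
  assumes "0 < \<alpha>" "0 < q" "0 \<le> \<eta>" "0 \<le> \<sigma>A2" "0 \<le> x" "0 \<le> hfun' \<alpha> \<eta> q x"
  shows "\<bar>bellman_err_D \<alpha> \<sigma>A2 (hfun \<alpha> \<eta> q) x - \<eta>\<bar>
    \<le> (\<eta> * \<bar>\<alpha>\<^sup>2 - q\<^sup>2\<bar> / \<alpha> + \<eta>\<^sup>2 / (2 * q) + \<sigma>A2 * \<eta> / (2 * q\<^sup>2)) / sqrt (2*x + q\<^sup>2)
      + \<sigma>A2 / (2 * sqrt (2*x + \<alpha>\<^sup>2))"
proof -
  have "\<alpha> \<le> sqrt (2*x + \<alpha>\<^sup>2)" "q \<le> sqrt (2*x + q\<^sup>2)"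
    using assms by (simp_all add: real_le_rsqrt)
  moreover have "(sqrt (2*x + \<alpha>\<^sup>2))\<^sup>2 - (sqrt (2*x + q\<^sup>2))\<^sup>2 = \<alpha>\<^sup>2 - q\<^sup>2"
    using assms by (simp add: two_mul_add_power2_pos less_imp_le)
  ultimately show ?thesis
    using assms bellman_residual_le[of \<alpha> "sqrt (2*x + \<alpha>\<^sup>2)" q "sqrt (2*x + q\<^sup>2)" \<eta> \<sigma>A2]
    by (simp add: bellman_err_D_hfun hfun''_def)
qed

theorem proposition6:
  fixes \<alpha> \<sigma>A2 \<eta> q :: real
  assumes "\<alpha> > 0" and "\<sigma>A2 \<ge> 0" and "\<eta> > 0" and "q > 0"
    and "deriv (hfun \<alpha> \<eta> q) 0 \<ge> 0"
  shows "convex_on {0..} (hfun \<alpha> \<eta> q)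
    \<and> mono_on {0..} (hfun \<alpha> \<eta> q)
    \<and> (\<exists>B. \<forall>x\<ge>0. \<bar>bellman_err_D \<alpha> \<sigma>A2 (hfun \<alpha> \<eta> q) x\<bar> \<le> B)
    \<and> (\<lambda>x. \<bar>bellman_err_D \<alpha> \<sigma>A2 (hfun \<alpha> \<eta> q) x - \<eta>\<bar>)
           \<in> O[at_top](\<lambda>x. (1 + x) powr (-1/2))"
proof -
  define E where "E = bellman_err_D \<alpha> \<sigma>A2 (hfun \<alpha> \<eta> q)"
  define K where "K = \<eta> * \<bar>\<alpha>\<^sup>2 - q\<^sup>2\<bar> / \<alpha> + \<eta>\<^sup>2 / (2 * q) + \<sigma>A2 * \<eta> / (2 * q\<^sup>2)"
  have h'0: "0 \<le> hfun' \<alpha> \<eta> q 0"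
    using assms by (simp add: deriv_hfun)
  have residual: "\<bar>E x - \<eta>\<bar> \<le> K / sqrt (2*x + q\<^sup>2) + \<sigma>A2 / (2 * sqrt (2*x + \<alpha>\<^sup>2))"
    if "0 \<le> x" for x
    using that assms h'0 hfun'_mono[of 0 x q \<eta> \<alpha>] unfolding E_def K_def
    by (intro bellman_err_D_hfun_residual_le) auto
  have "\<bar>E x\<bar> \<le> \<eta> + K / q + \<sigma>A2 / (2 * \<alpha>)" if "0 \<le> x" for x
  proof -
    have "K / sqrt (2*x + q\<^sup>2) \<le> K / q" "\<sigma>A2 / (2 * sqrt (2*x + \<alpha>\<^sup>2)) \<le> \<sigma>A2 / (2 * \<alpha>)"
      using that assms
      by (auto simp: K_def real_le_rsqrt two_mul_add_power2_pos intro!: divide_left_mono mult_pos_pos)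
    then show ?thesis
      using residual[OF that] assms by linarith
  qed
  moreover have "(\<lambda>x. \<bar>E x - \<eta>\<bar>) \<in> O[at_top](\<lambda>x. (1 + x) powr (-1/2))"
  proof (rule landau_o.big_trans)
    show "(\<lambda>x. \<bar>E x - \<eta>\<bar>) \<in> O[at_top](\<lambda>x. K / sqrt (2*x + q\<^sup>2) + \<sigma>A2 / (2 * sqrt (2*x + \<alpha>\<^sup>2)))"
    proof (rule landau_o.big_mono)
      show "\<forall>\<^sub>F x in at_top. norm \<bar>E x - \<eta>\<bar>
          \<le> norm (K / sqrt (2*x + q\<^sup>2) + \<sigma>A2 / (2 * sqrt (2*x + \<alpha>\<^sup>2)))"
        using eventually_ge_at_top[of "0::real"]
        by eventually_elim (auto intro: order.trans[OF residual abs_ge_self])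
    qed
    show "(\<lambda>x. K / sqrt (2*x + q\<^sup>2) + \<sigma>A2 / (2 * sqrt (2*x + \<alpha>\<^sup>2)))
        \<in> O[at_top](\<lambda>x. (1 + x) powr (-1/2))"
      by real_asymp
  qed
  ultimately show ?thesis
    using assms h'0 convex_on_hfun mono_on_hfun unfolding E_def by auto
qed

end
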